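(* Let $n_\theta\in\mathbb{N}$ and let $\kappa:\mathbb{R}^{n_\theta}\times\mathbb{R}^{n_\theta}\to\mathbb{R}$ be a kernel (as in the context) with reproducing kernel Hilbert space $\mathcal{H}$. Let a dataset $\mathcal{D}_k=\{(\widetilde\theta_i,\widetilde y_i)\mid i=1,\dots,N_k\}\subset\mathbb{R}^{n_\theta}\times\mathbb{R}$, constants $\bar\delta\ge 0$ and $\Gamma>0$, and a function $f\in\mathcal{H}$ be given such that $\lVert f\rVert\le\Gamma$ and $|f(\widetilde\theta_i)-\widetilde y_i|\le\bar\delta$ for all $i=1,\dots,N_k$. Let $m_k$ be defined by $$m_k=\arg\min_{m\in\mathcal{H}}\lVert m\rVert^2\quad\text{s.t. } |m(\widetilde\theta_i)-\widetilde y_i|\le\bar\delta\ \ \forall i\in\{1,\dots,N_k\}.$$ Define the feasible set $\mathcal{F}:=\{g\in\mathcal{H}: \lVert g\rVert^2\le\Gamma^2,\ |g(\widetilde\theta_i)-\widetilde y_i|\le\bar\delta\ \forall i=1,\dots,N_k\}$ (so $f\in\mathcal{F}$). Fix $\theta\in\mathbb{R}^{n_\theta}$. (i) With $N=N_k+n_\theta$, the infimum $\inf_{g\in\mathcal{F}}\nabla g(\theta)^\top\nabla m_k(\theta)$ is attained and equals the optimal value of the second-order cone program $$\underline b(\theta):=\min_{\beta\in\mathbb{R}^N}\ \begin{bmatrix}0_{1\times N_k} & \nabla m_k(\theta)^\top\end{bmatrix}\mathfrak{K}(\theta)\beta\quad\text{s.t.}\quad \beta^\top\mathfrak{K}(\theta)\beta\le\Gamma^2,\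 \ |\xi_i^\top\mathfrak{K}(\theta)\beta-\widetilde y_i|\le\bar\delta\ \ \forall i\in\{1,\dots,N_k\},$$ where $\xi_i\in\mathbb{R}^N$ is the $i$-th standard basis vector. In particular $\nabla f(\theta)^\top\nabla m_k(\theta)\ge\underline b(\theta)$. (ii) For any $\mu>0$ and $c\in(0,1)$, let $\theta^+:=\theta-\mu\nabla m_k(\theta)$ and $N=N_k+2+n_\theta$. Then the supremum $\sup_{g\in\mathcal{F}}\big(g(\theta^+)-g(\theta)+c\mu\nabla g(\theta)^\top\nabla m_k(\theta)\big)$ is attained and equals the optimal value of the second-order cone program $$\bar b(\theta,\mu):=\max_{\beta\in\mathbb{R}^N}\ \begin{bmatrix}0_{1\times N_k} & -1 & 1 & c\mu\nabla m_k(\theta)^\top\end{bmatrix}\mathfrak{K}'(\theta,\theta^+)\beta\quad\text{s.t.}\quad\beta^\top\mathfrak{K}'(\theta,\theta^+)\beta\le\Gamma^2,\ \ |\xi_i^\top\mathfrak{K}'(\theta,\theta^+)\beta-\widetilde y_i|\le\bar\delta\ \ \forall i\in\{1,\dots,N_k\},$$ with $\xi_i\in\mathbb{R}^N$ the $i$-th standard basis vector. In particular $f(\theta^+)-f(\theta)+c\mu\nabla f(\theta)^\top\nabla m_k(\theta)\le\bar b(\theta,\mu)$.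
   Context: A kernel is a continuous, symmetric, twice continuously differentiable function $\kappa:\mathbb{R}^{n_\theta}\times\mathbb{R}^{n_\theta}\to\mathbb{R}$ that is positive definite in the sense that for every $N\in\mathbb{N}$ and every $\theta_1,\dots,\theta_N\in\mathbb{R}^{n_\theta}$ the matrix $[\kappa(\theta_i,\theta_j)]_{i,j}$ is positive semidefinite. $\mathcal{H}$ is its unique reproducing kernel Hilbert space (completion of finite sums $\sum_i\alpha_i\kappa(\cdot,\theta_i)$ under $\langle\kappa(\cdot,a),\kappa(\cdot,b)\rangle=\kappa(a,b)$), with norm $\lVert g\rVert=\sqrt{\langle g,g\rangle}$. Notation: $D^{(a,b)}\kappa(\theta,\theta')$ denotes the mixed partial derivative of $\kappa$ of multi-order $a$ in the first argument and $b$ in the second; $e_j\in\mathbb{R}^{n_\theta}$ is the $j$-th standard basis vector. With $\Omega=\{\widetilde\theta_1,\dots,\widetilde\theta_{N_k}\}$: $K_{\Omega\Omega}$ is the $N_k\times N_k$ matrix with entries $\kappa(\widetilde\theta_i,\widetilde\theta_j)$; $K_\Omega(z)=[\kappa(z,\widetilde\theta_1)\ \cdots\ \kappa(z,\widetilde\theta_{N_k})]$ (row vector); $\nabla K_\Omega(z)$ is the $n_\theta\times N_k$ matrix with $(j,i)$ entry $D^{(e_j,0)}\kappa(z,\widetilde\theta_i)$; $\nabla K(a,b):=[D^{(e_1,0)}\kappa(a,b)\ \cdots\ D^{(e_{n_\theta},0)}\kappa(a,b)]^\top\in\mathbb{R}^{n_\theta}$; $D^2_{1,2}\kappa(\theta,\theta)$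 is the $n_\theta\times n_\theta$ matrix with $(i,j)$ entry $D^{(e_i,e_j)}\kappa(\theta,\theta)$. $$\mathfrak{K}(\theta):=\begin{bmatrix}K_{\Omega\Omega} & \nabla K_\Omega(\theta)^\top\\ \nabla K_\Omega(\theta) & D^2_{1,2}\kappa(\theta,\theta)\end{bmatrix},$$ $$\mathfrak{K}'(\theta,\theta^+):=\begin{bmatrix}K_{\Omega\Omega} & K_\Omega(\theta)^\top & K_\Omega(\theta^+)^\top & \nabla K_\Omega(\theta)^\top\\ K_\Omega(\theta) & \kappa(\theta,\theta) & \kappa(\theta,\theta^+) & \nabla K(\theta,\theta)^\top\\ K_\Omega(\theta^+) & \kappa(\theta^+,\theta) & \kappa(\theta^+,\theta^+) & \nabla K(\theta,\theta^+)^\top\\ \nabla K_\Omega(\theta) & \nabla K(\theta,\theta) & \nabla K(\theta,\theta^+) & D^2_{1,2}\kappa(\theta,\theta)\end{bmatrix}.$$ If points among $\widetilde\theta_1,\dots,\widetilde\theta_{N_k},\theta,\theta^+$ coincide, duplicated rows/columns may be removed; this does not change the optimal values. *)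

theory Defs
  imports "HOL-Analysis.Analysis"
begin

definition pd1 :: "(real^'n \<Rightarrow> real^'n \<Rightarrow> real) \<Rightarrow> 'n \<Rightarrow> real^'n \<Rightarrow> real^'n \<Rightarrow> real" where
  "pd1 k j a b = deriv (\<lambda>t. k (a + t *\<^sub>R axis j 1) b) 0"

definition pd12 :: "(real^'n \<Rightarrow> real^'n \<Rightarrow> real) \<Rightarrow> 'n \<Rightarrow> 'n \<Rightarrow> real^'n \<Rightarrow> real^'n \<Rightarrow> real" where
  "pd12 k i j a b = deriv (\<lambda>s. pd1 k i a (b + s *\<^sub>R axis j 1)) 0"

definition grad :: "(real^'n \<Rightarrow> real) \<Rightarrow> real^'n \<Rightarrow> real^'n" where
  "grad g x = (\<chi> j. deriv (\<lambda>t. g (x + t *\<^sub>R axis j 1)) 0)"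

definition C2 :: "('a::real_normed_vector \<Rightarrow> real) \<Rightarrow> bool" where
  "C2 f \<longleftrightarrow> (\<exists>(D1 :: 'a \<Rightarrow> 'a \<Rightarrow>\<^sub>L real) (D2 :: 'a \<Rightarrow> 'a \<Rightarrow>\<^sub>L ('a \<Rightarrow>\<^sub>L real)).
      (\<forall>x. (f has_derivative blinfun_apply (D1 x)) (at x)) \<and>
      (\<forall>x. (D1 has_derivative blinfun_apply (D2 x)) (at x)) \<and>
      continuous_on UNIV D2)"

definition is_kernel :: "(real^'n \<Rightarrow> real^'n \<Rightarrow> real) \<Rightarrow> bool" where
  "is_kernel k \<longleftrightarrow>
     continuous_on UNIV (\<lambda>z. k (fst z) (snd z)) \<and>
     (\<forall>a b. k a b = k b a) \<and>
     C2 (\<lambda>z :: (real^'n) \<times> (real^'n). k (fst z) (snd z)) \<and>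
     (\<forall>(N::nat) (p :: nat \<Rightarrow> real^'n) (\<alpha> :: nat \<Rightarrow> real).
        0 \<le> (\<Sum>i<N. \<Sum>j<N. \<alpha> i * \<alpha> j * k (p i) (p j)))"

definition rnorm :: "(('a \<Rightarrow> real) \<Rightarrow> ('a \<Rightarrow> real) \<Rightarrow> real) \<Rightarrow> ('a \<Rightarrow> real) \<Rightarrow> real" where
  "rnorm ip g = sqrt (ip g g)"

text \<open>(H, ip) is a real Hilbert space of functions in which k is a reproducing
  kernel. By the Moore-Aronszajn theorem this determines (H, ip) uniquely, so it is
  the RKHS of k.\<close>
definition is_RKHS :: "(real^'n \<Rightarrow> real^'n \<Rightarrow> real) \<Rightarrow> (real^'n \<Rightarrow> real) set
    \<Rightarrow> ((real^'n \<Rightarrow> real) \<Rightarrow> (real^'n \<Rightarrow> real) \<Rightarrow> real) \<Rightarrow> bool" where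
  "is_RKHS k H ip \<longleftrightarrow>
     (\<forall>y. (\<lambda>x. k x y) \<in> H) \<and>
     (\<forall>g\<in>H. \<forall>h\<in>H. (\<lambda>x. g x + h x) \<in> H) \<and>
     (\<forall>g\<in>H. \<forall>c::real. (\<lambda>x. c * g x) \<in> H) \<and>
     (\<forall>g\<in>H. \<forall>h\<in>H. ip g h = ip h g) \<and>
     (\<forall>g\<in>H. \<forall>h\<in>H. \<forall>u\<in>H. ip (\<lambda>x. g x + h x) u = ip g u + ip h u) \<and>
     (\<forall>g\<in>H. \<forall>h\<in>H. \<forall>c::real. ip (\<lambda>x. c * g x) h = c * ip g h) \<and>
     (\<forall>g\<in>H. 0 \<le> ip g g) \<and>
     (\<forall>g\<in>H. ip g g = 0 \<longrightarrow> g = (\<lambda>x. 0)) \<and>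
     (\<forall>g\<in>H. \<forall>y. ip g (\<lambda>x. k x y) = g y) \<and>
     (\<forall>s :: nat \<Rightarrow> (real^'n \<Rightarrow> real).
        (\<forall>n. s n \<in> H) \<and>
        (\<forall>e>0. \<exists>M. \<forall>m\<ge>M. \<forall>n\<ge>M. rnorm ip (\<lambda>x. s m x - s n x) < e)
        \<longrightarrow> (\<exists>l\<in>H. (\<lambda>n. rnorm ip (\<lambda>x. s n x - l x)) \<longlonglongrightarrow> 0))"

text \<open>Index set of the block matrix frakK(theta): data points Dat i (i < N_k)
  followed by the n_theta gradient components Gr j.\<close>
datatype 'n idx1 = Dat nat | Gr 'n

definition idx1_set :: "nat \<Rightarrow> ('n::finite) idx1 set" where
  "idx1_set Nk = Dat ` {..<Nk} \<union> range Gr"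

definition Kfrak :: "(real^'n \<Rightarrow> real^'n \<Rightarrow> real) \<Rightarrow> (nat \<Rightarrow> real^'n) \<Rightarrow> real^'n
    \<Rightarrow> 'n idx1 \<Rightarrow> 'n idx1 \<Rightarrow> real" where
  "Kfrak k th \<theta> p q =
     (case p of
        Dat i \<Rightarrow> (case q of Dat j \<Rightarrow> k (th i) (th j) | Gr l \<Rightarrow> pd1 k l \<theta> (th i))
      | Gr l \<Rightarrow> (case q of Dat j \<Rightarrow> pd1 k l \<theta> (th j) | Gr l' \<Rightarrow> pd12 k l l' \<theta> \<theta>))"

text \<open>Index set of frakK'(theta,theta+): data points, theta, theta+, gradient
  components.\<close>
datatype 'n idx2 = Dat2 nat | Th | ThP | Gr2 'n

definition idx2_set :: "nat \<Rightarrow> ('n::finite) idx2 set" where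
  "idx2_set Nk = Dat2 ` {..<Nk} \<union> {Th, ThP} \<union> range Gr2"

definition Kfrak2 :: "(real^'n \<Rightarrow> real^'n \<Rightarrow> real) \<Rightarrow> (nat \<Rightarrow> real^'n) \<Rightarrow> real^'n \<Rightarrow> real^'n
    \<Rightarrow> 'n idx2 \<Rightarrow> 'n idx2 \<Rightarrow> real" where
  "Kfrak2 k th \<theta> \<theta>p p q =
     (case p of
        Dat2 i \<Rightarrow> (case q of Dat2 j \<Rightarrow> k (th i) (th j) | Th \<Rightarrow> k \<theta> (th i)
                   | ThP \<Rightarrow> k \<theta>p (th i) | Gr2 l \<Rightarrow> pd1 k l \<theta> (th i))
      | Th \<Rightarrow> (case q of Dat2 j \<Rightarrow> k \<theta> (th j) | Th \<Rightarrow> k \<theta> \<theta>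
                   | ThP \<Rightarrow> k \<theta> \<theta>p | Gr2 l \<Rightarrow> pd1 k l \<theta> \<theta>)
      | ThP \<Rightarrow> (case q of Dat2 j \<Rightarrow> k \<theta>p (th j) | Th \<Rightarrow> k \<theta>p \<theta>
                   | ThP \<Rightarrow> k \<theta>p \<theta>p | Gr2 l \<Rightarrow> pd1 k l \<theta> \<theta>p)
      | Gr2 l \<Rightarrow> (case q of Dat2 j \<Rightarrow> pd1 k l \<theta> (th j) | Th \<Rightarrow> pd1 k l \<theta> \<theta>
                   | ThP \<Rightarrow> pd1 k l \<theta> \<theta>p | Gr2 l' \<Rightarrow> pd12 k l l' \<theta> \<theta>))"

definition quadf :: "'i set \<Rightarrow> ('i \<Rightarrow> 'i \<Rightarrow> real) \<Rightarrow> ('i \<Rightarrow> real) \<Rightarrow> real" where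
  "quadf I M \<beta> = (\<Sum>p\<in>I. \<Sum>q\<in>I. \<beta> p * M p q * \<beta> q)"

definition mrow :: "'i set \<Rightarrow> ('i \<Rightarrow> 'i \<Rightarrow> real) \<Rightarrow> 'i \<Rightarrow> ('i \<Rightarrow> real) \<Rightarrow> real" where
  "mrow I M p \<beta> = (\<Sum>q\<in>I. M p q * \<beta> q)"

definition linf :: "'i set \<Rightarrow> ('i \<Rightarrow> real) \<Rightarrow> ('i \<Rightarrow> 'i \<Rightarrow> real) \<Rightarrow> ('i \<Rightarrow> real) \<Rightarrow> real" where
  "linf I c M \<beta> = (\<Sum>p\<in>I. c p * mrow I M p \<beta>)"

definition cost1 :: "real^'n \<Rightarrow> 'n idx1 \<Rightarrow> real" where
  "cost1 v p = (case p of Dat i \<Rightarrow> 0 | Gr j \<Rightarrow> v $ j)"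

definition cost2 :: "real \<Rightarrow> real \<Rightarrow> real^'n \<Rightarrow> 'n idx2 \<Rightarrow> real" where
  "cost2 c \<mu> v p = (case p of Dat2 i \<Rightarrow> 0 | Th \<Rightarrow> -1 | ThP \<Rightarrow> 1 | Gr2 j \<Rightarrow> c * \<mu> * v $ j)"

text \<open>beta is feasible: beta^T M beta <= Gamma^2 and |xi_i^T M beta - y_i| <= delta,
  where xi_i^T M beta is the row of M indexed by data point i applied to beta.\<close>
definition socp1_feasible where
  "socp1_feasible k th yt Nk \<delta> \<Gamma> \<theta> (\<beta> :: ('n::finite) idx1 \<Rightarrow> real) \<longleftrightarrow>
     quadf (idx1_set Nk) (Kfrak k th \<theta>) \<beta> \<le> \<Gamma>\<^sup>2 \<and>
     (\<forall>i<Nk. \<bar>mrow (idx1_set Nk) (Kfrak k th \<theta>) (Dat i) \<beta> - yt i\<bar> \<le> \<delta>)"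

definition socp2_feasible where
  "socp2_feasible k th yt Nk \<delta> \<Gamma> \<theta> \<theta>p (\<beta> :: ('n::finite) idx2 \<Rightarrow> real) \<longleftrightarrow>
     quadf (idx2_set Nk) (Kfrak2 k th \<theta> \<theta>p) \<beta> \<le> \<Gamma>\<^sup>2 \<and>
     (\<forall>i<Nk. \<bar>mrow (idx2_set Nk) (Kfrak2 k th \<theta> \<theta>p) (Dat2 i) \<beta> - yt i\<bar> \<le> \<delta>)"

end

theory Submission
  imports Defs
begin

(*
  Since the kernel is C2, the difference quotients (k(., theta + t e) - k(., theta)) / t form
  a Cauchy family in H as t -> 0 (their inner products are second difference quotients of k),
  and their limit l represents the directional derivative: d/dt g(theta + t e) at t = 0 equals
  <l, g> for every g in H, and for e = e_j the function l is D^(e_j,0) k(theta, .). Hence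
  function values, gradients, both objectives and the data constraints are inner products with
  elements of the finite-dimensional span V of the kernel sections at the data points, theta and
  theta+ and of these derivative sections. Orthogonal projection onto V keeps objectives and data
  values and does not increase the norm, so the optimum over the feasible set is attained in V,
  where, in an orthonormal basis, it is a continuous function on a compact set. For
  g = sum_p beta_p r_p in V, the squared norm, data values and objective are beta^T K beta, rows
  of K beta and c^T K beta, with K the Gram matrix of the r_p, which is the block matrix of the SOCP.
*)

section \<open>Second differences of C2 functions\<close>

lemma MVT_from_zero:
  fixes f :: "real \<Rightarrow> real"
  assumes "\<And>x. DERIV f x :> f' x" and "t \<noteq> 0"
  shows "\<exists>\<tau>. \<bar>\<tau>\<bar> \<le> \<bar>t\<bar> \<and> f t - f 0 = t * f' \<tau>"
proof (cases "t > 0")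
  case True
  from MVT2[OF True assms(1)] obtain z where "0 < z" "z < t" "f t - f 0 = (t - 0) * f' z" by blast
  then show ?thesis by (intro exI[of _ z]) auto
next
  case False
  then have "t < 0" using assms(2) by simp
  from MVT2[OF this assms(1)] obtain z where "t < z" "z < 0" "f 0 - f t = (0 - t) * f' z" by blast
  then show ?thesis by (intro exI[of _ z]) auto
qed

lemma has_real_derivative_along_line:
  fixes F :: "'a::real_normed_vector \<Rightarrow> real"
  assumes "\<And>x. (F has_derivative F' x) (at x)"
  shows "((\<lambda>\<tau>. F (a + \<tau> *\<^sub>R u)) has_real_derivative F' (a + \<tau>\<^sub>0 *\<^sub>R u) u) (at \<tau>\<^sub>0)"
proof -
  have "((\<lambda>\<tau>. a + \<tau> *\<^sub>R u) has_derivative (\<lambda>h. h *\<^sub>R u)) (at \<tau>\<^sub>0)"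
    by (auto intro!: derivative_eq_intros)
  from has_derivative_compose[OF this assms]
  have "((\<lambda>\<tau>. F (a + \<tau> *\<^sub>R u)) has_derivative (\<lambda>h. F' (a + \<tau>\<^sub>0 *\<^sub>R u) (h *\<^sub>R u))) (at \<tau>\<^sub>0)" .
  moreover have "(\<lambda>h. F' (a + \<tau>\<^sub>0 *\<^sub>R u) (h *\<^sub>R u)) = (*) (F' (a + \<tau>\<^sub>0 *\<^sub>R u) u)"
    using linear_scale[OF has_derivative_linear[OF assms]] by (auto simp: mult.commute)
  ultimately show ?thesis
    unfolding has_field_derivative_def by simp
qed

lemma second_difference_mean_value:
  fixes F :: "'a::real_normed_vector \<Rightarrow> real"
  assumes d1: "\<And>x. (F has_derivative blinfun_apply (D1 x)) (at x)"
    and d2: "\<And>x. (D1 has_derivative blinfun_apply (D2 x)) (at x)"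
    and "s \<noteq> 0" "t \<noteq> 0"
  shows "\<exists>\<tau> \<sigma>. \<bar>\<tau>\<bar> \<le> \<bar>t\<bar> \<and> \<bar>\<sigma>\<bar> \<le> \<bar>s\<bar> \<and>
     F (x + t *\<^sub>R u + s *\<^sub>R v) - F (x + t *\<^sub>R u) - F (x + s *\<^sub>R v) + F x
       = t * s * D2 (x + \<tau> *\<^sub>R u + \<sigma> *\<^sub>R v) v u"
proof -
  define p where "p \<tau> = F (x + s *\<^sub>R v + \<tau> *\<^sub>R u) - F (x + \<tau> *\<^sub>R u)" for \<tau>
  have dp: "DERIV p \<tau> :> D1 (x + s *\<^sub>R v + \<tau> *\<^sub>R u) u - D1 (x + \<tau> *\<^sub>R u) u" for \<tau>
    unfolding p_def by (intro DERIV_diff has_real_derivative_along_line d1)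
  obtain \<tau> where \<tau>: "\<bar>\<tau>\<bar> \<le> \<bar>t\<bar>"
    "p t - p 0 = t * (D1 (x + s *\<^sub>R v + \<tau> *\<^sub>R u) u - D1 (x + \<tau> *\<^sub>R u) u)"
    using MVT_from_zero[OF dp \<open>t \<noteq> 0\<close>] by blast
  define q where "q \<sigma> = D1 (x + \<tau> *\<^sub>R u + \<sigma> *\<^sub>R v) u" for \<sigma>
  have "((\<lambda>z. D1 z u) has_derivative (\<lambda>h. D2 z h u)) (at z)" for z
    using bounded_linear.has_derivative[OF blinfun.bounded_linear_left d2] by simp
  then have dq: "DERIV q \<sigma> :> D2 (x + \<tau> *\<^sub>R u + \<sigma> *\<^sub>R v) v u" for \<sigma>
    unfolding q_def by (rule has_real_derivative_along_line)
  obtain \<sigma> where \<sigma>: "\<bar>\<sigma>\<bar> \<le> \<bar>s\<bar>" "q s - q 0 = s * D2 (x + \<tau> *\<^sub>R u + \<sigma> *\<^sub>R v) v u"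
    using MVT_from_zero[OF dq \<open>s \<noteq> 0\<close>] by blast
  have "F (x + t *\<^sub>R u + s *\<^sub>R v) - F (x + t *\<^sub>R u) - F (x + s *\<^sub>R v) + F x = p t - p 0"
    by (simp add: p_def algebra_simps)
  also have "\<dots> = t * (q s - q 0)"
    using \<tau>(2) by (simp add: q_def algebra_simps)
  finally show ?thesis
    using \<tau>(1) \<sigma> by (intro exI[of _ \<tau>] exI[of _ \<sigma>]) simp
qed

lemma second_difference_quotient_converges:
  fixes F :: "'a::real_normed_vector \<Rightarrow> real"
  assumes "C2 F"
  shows "\<exists>c. \<forall>\<epsilon>>0. \<exists>\<eta>>0. \<forall>s t. s \<noteq> 0 \<longrightarrow> t \<noteq> 0 \<longrightarrow> \<bar>s\<bar> < \<eta> \<longrightarrow> \<bar>t\<bar> < \<eta> \<longrightarrow>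
     \<bar>(F (x + t *\<^sub>R u + s *\<^sub>R v) - F (x + t *\<^sub>R u) - F (x + s *\<^sub>R v) + F x) / (s * t) - c\<bar> < \<epsilon>"
proof -
  obtain D1 :: "'a \<Rightarrow> 'a \<Rightarrow>\<^sub>L real" and D2 :: "'a \<Rightarrow> 'a \<Rightarrow>\<^sub>L ('a \<Rightarrow>\<^sub>L real)"
    where d1: "\<And>x. (F has_derivative blinfun_apply (D1 x)) (at x)"
      and d2: "\<And>x. (D1 has_derivative blinfun_apply (D2 x)) (at x)"
      and "continuous_on UNIV D2"
    using assms unfolding C2_def by blast
  then have cont: "continuous_on UNIV (\<lambda>z. D2 z v u)"
    by (intro continuous_intros) auto
  have "\<exists>\<eta>>0. \<forall>s t. s \<noteq> 0 \<longrightarrow> t \<noteq> 0 \<longrightarrow> \<bar>s\<bar> < \<eta> \<longrightarrow> \<bar>t\<bar> < \<eta> \<longrightarrow>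
      \<bar>(F (x + t *\<^sub>R u + s *\<^sub>R v) - F (x + t *\<^sub>R u) - F (x + s *\<^sub>R v) + F x) / (s * t) - D2 x v u\<bar> < \<epsilon>"
    if "\<epsilon> > 0" for \<epsilon>
  proof -
    obtain d where "d > 0" and d: "\<And>z. dist z x < d \<Longrightarrow> \<bar>D2 z v u - D2 x v u\<bar> < \<epsilon>"
      using cont \<open>\<epsilon> > 0\<close> unfolding continuous_on_iff dist_real_def by blast
    define \<eta> where "\<eta> = d / (norm u + norm v + 1)"
    have "norm u + norm v + 1 > 0"
      by (simp add: add_nonneg_pos)
    then have \<eta>: "\<eta> > 0" "\<eta> * (norm u + norm v) < d"
      using \<open>d > 0\<close> by (simp_all add: \<eta>_def divide_simps)
    have "\<bar>(F (x + t *\<^sub>R u + s *\<^sub>R v) - F (x + t *\<^sub>R u) - F (x + s *\<^sub>R v) + F x) / (s * t) - D2 x v u\<bar> < \<epsilon>"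
      if st: "s \<noteq> 0" "t \<noteq> 0" "\<bar>s\<bar> < \<eta>" "\<bar>t\<bar> < \<eta>" for s t
    proof -
      obtain \<tau> \<sigma> where \<tau>\<sigma>: "\<bar>\<tau>\<bar> \<le> \<bar>t\<bar>" "\<bar>\<sigma>\<bar> \<le> \<bar>s\<bar>"
        and eq: "F (x + t *\<^sub>R u + s *\<^sub>R v) - F (x + t *\<^sub>R u) - F (x + s *\<^sub>R v) + F x
          = t * s * D2 (x + \<tau> *\<^sub>R u + \<sigma> *\<^sub>R v) v u"
        using second_difference_mean_value[OF d1 d2 st(1,2)] by blast
      have "dist (x + \<tau> *\<^sub>R u + \<sigma> *\<^sub>R v) x \<le> \<bar>\<tau>\<bar> * norm u + \<bar>\<sigma>\<bar> * norm v"
        by (simp add: dist_norm norm_triangle_le)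
      also have "\<dots> \<le> \<eta> * (norm u + norm v)"
        using \<tau>\<sigma> st by (auto simp: distrib_left intro!: add_mono mult_right_mono)
      finally have "\<bar>D2 (x + \<tau> *\<^sub>R u + \<sigma> *\<^sub>R v) v u - D2 x v u\<bar> < \<epsilon>"
        using d \<eta>(2) by simp
      then show ?thesis
        using eq st(1,2) by simp
    qed
    then show ?thesis
      using \<eta>(1) by blast
  qed
  then show ?thesis
    by blast
qed

section \<open>Finite linear combinations of functions\<close>

definition lincomb :: "'i set \<Rightarrow> ('i \<Rightarrow> real) \<Rightarrow> ('i \<Rightarrow> 'a \<Rightarrow> real) \<Rightarrow> 'a \<Rightarrow> real" where
  "lincomb I c v = (\<lambda>x. \<Sum>i\<in>I. c i * v i x)"

definition lspan :: "'i set \<Rightarrow> ('i \<Rightarrow> 'a \<Rightarrow> real) \<Rightarrow> ('a \<Rightarrow> real) set" where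
  "lspan I v = range (\<lambda>c. lincomb I c v)"

lemma lincomb_in_lspan [simp]: "lincomb I c v \<in> lspan I v"
  by (simp add: lspan_def)

lemma generator_in_lspan:
  assumes "finite I" "i \<in> I"
  shows "v i \<in> lspan I v"
proof -
  have "v i = lincomb I (\<lambda>j. if j = i then 1 else 0) v"
    using assms unfolding lincomb_def by (auto intro!: ext simp: mult_if_delta)
  then show ?thesis by simp
qed

lemma lspan_cong: "(\<And>i. i \<in> I \<Longrightarrow> v i = w i) \<Longrightarrow> lspan I v = lspan I w"
  unfolding lspan_def lincomb_def by (metis (no_types, lifting) sum.cong)

lemma lspan_add:
  assumes "g \<in> lspan I v" "h \<in> lspan I v"
  shows "(\<lambda>x. g x + h x) \<in> lspan I v"
proof -
  obtain c d where "g = lincomb I c v" "h = lincomb I d v"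
    using assms unfolding lspan_def by blast
  then have "(\<lambda>x. g x + h x) = lincomb I (\<lambda>i. c i + d i) v"
    by (simp add: lincomb_def distrib_right sum.distrib)
  then show ?thesis by simp
qed

lemma lspan_scale:
  assumes "g \<in> lspan I v"
  shows "(\<lambda>x. a * g x) \<in> lspan I v"
proof -
  obtain c where "g = lincomb I c v"
    using assms unfolding lspan_def by blast
  then have "(\<lambda>x. a * g x) = lincomb I (\<lambda>i. a * c i) v"
    by (simp add: lincomb_def sum_distrib_left mult.assoc)
  then show ?thesis by simp
qed

lemma lincomb_lincomb:
  assumes "\<forall>j\<in>J. w j = lincomb I (B j) v"
  shows "lincomb J c w = lincomb I (\<lambda>i. \<Sum>j\<in>J. c j * B j i) v"
proof
  fix x
  have "lincomb J c w x = (\<Sum>j\<in>J. \<Sum>i\<in>I. c j * B j i * v i x)"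
    using assms by (simp add: lincomb_def sum_distrib_left mult.assoc)
  also have "\<dots> = lincomb I (\<lambda>i. \<Sum>j\<in>J. c j * B j i) v x"
    by (simp add: lincomb_def sum_distrib_right sum.swap[of _ J])
  finally show "lincomb J c w x = lincomb I (\<lambda>i. \<Sum>j\<in>J. c j * B j i) v x" .
qed

lemma lspan_subset:
  assumes "\<forall>j\<in>J. w j \<in> lspan I v"
  shows "lspan J w \<subseteq> lspan I v"
proof
  have "\<forall>j\<in>J. \<exists>b. w j = lincomb I b v"
    using assms by (auto simp: lspan_def)
  then obtain B where B: "\<forall>j\<in>J. w j = lincomb I (B j) v"
    by (metis bchoice)
  fix g assume "g \<in> lspan J w"
  then obtain c where "g = lincomb J c w"
    by (auto simp: lspan_def)
  then show "g \<in> lspan I v"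
    by (simp add: lincomb_lincomb[OF B])
qed

lemma lspan_mono: "finite J \<Longrightarrow> I \<subseteq> J \<Longrightarrow> lspan I v \<subseteq> lspan J v"
  by (meson generator_in_lspan lspan_subset subsetD)

section \<open>Hilbert spaces of real functions\<close>

locale fun_hilbert_space =
  fixes H :: "('a \<Rightarrow> real) set" and ip :: "('a \<Rightarrow> real) \<Rightarrow> ('a \<Rightarrow> real) \<Rightarrow> real"
  assumes zero_in: "(\<lambda>x. 0) \<in> H"
    and add_in: "g \<in> H \<Longrightarrow> h \<in> H \<Longrightarrow> (\<lambda>x. g x + h x) \<in> H"
    and scale_in: "g \<in> H \<Longrightarrow> (\<lambda>x. c * g x) \<in> H"
    and ip_commute: "g \<in> H \<Longrightarrow> h \<in> H \<Longrightarrow> ip g h = ip h g"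
    and ip_add_left: "g \<in> H \<Longrightarrow> h \<in> H \<Longrightarrow> u \<in> H \<Longrightarrow> ip (\<lambda>x. g x + h x) u = ip g u + ip h u"
    and ip_scale_left: "g \<in> H \<Longrightarrow> h \<in> H \<Longrightarrow> ip (\<lambda>x. c * g x) h = c * ip g h"
    and ip_self_nonneg: "g \<in> H \<Longrightarrow> 0 \<le> ip g g"
    and ip_self_eq_0: "g \<in> H \<Longrightarrow> ip g g = 0 \<Longrightarrow> g = (\<lambda>x. 0)"
    and Cauchy_converges: "(\<And>n. s n \<in> H) \<Longrightarrow>
        (\<forall>e>0. \<exists>M. \<forall>m\<ge>M. \<forall>n\<ge>M. rnorm ip (\<lambda>x. s m x - s n x) < e) \<Longrightarrow>
        \<exists>l\<in>H. (\<lambda>n. rnorm ip (\<lambda>x. s n x - l x)) \<longlonglongrightarrow> 0"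
begin

lemma diff_in: "g \<in> H \<Longrightarrow> h \<in> H \<Longrightarrow> (\<lambda>x. g x - h x) \<in> H"
  using add_in[of g "\<lambda>x. (-1) * h x"] scale_in[of h "-1"] by simp

lemma divide_in: "g \<in> H \<Longrightarrow> (\<lambda>x. g x / c) \<in> H"
  using scale_in[of g "1 / c"] by simp

lemma ip_add_right: "g \<in> H \<Longrightarrow> h \<in> H \<Longrightarrow> u \<in> H \<Longrightarrow> ip u (\<lambda>x. g x + h x) = ip u g + ip u h"
  using ip_add_left[of g h u] ip_commute[of u] ip_commute[of u "\<lambda>x. g x + h x"] add_in by simp

lemma ip_scale_right: "g \<in> H \<Longrightarrow> h \<in> H \<Longrightarrow> ip h (\<lambda>x. c * g x) = c * ip h g"
  using ip_scale_left[of g h c] ip_commute[of h] ip_commute[of h "\<lambda>x. c * g x"] scale_in by simp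

lemma ip_diff_left: "g \<in> H \<Longrightarrow> h \<in> H \<Longrightarrow> u \<in> H \<Longrightarrow> ip (\<lambda>x. g x - h x) u = ip g u - ip h u"
  using ip_add_left[of g "\<lambda>x. (-1) * h x" u] ip_scale_left[of h u "-1"] scale_in[of h "-1"] by simp

lemma ip_diff_right: "g \<in> H \<Longrightarrow> h \<in> H \<Longrightarrow> u \<in> H \<Longrightarrow> ip u (\<lambda>x. g x - h x) = ip u g - ip u h"
  using ip_diff_left[of g h u] ip_commute[of u] ip_commute[of u "\<lambda>x. g x - h x"] diff_in by simp

lemma ip_divide_left: "g \<in> H \<Longrightarrow> h \<in> H \<Longrightarrow> ip (\<lambda>x. g x / c) h = ip g h / c"
  using ip_scale_left[of g h "1 / c"] by simp

lemma ip_zero_left: "u \<in> H \<Longrightarrow> ip (\<lambda>x. 0) u = 0"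
  using ip_scale_left[of u u 0] by simp

lemma ip_zero_right: "u \<in> H \<Longrightarrow> ip u (\<lambda>x. 0) = 0"
  using ip_zero_left[of u] ip_commute[of u "\<lambda>x. 0"] zero_in by simp

lemma ip_diff_self:
  "g \<in> H \<Longrightarrow> h \<in> H \<Longrightarrow> ip (\<lambda>x. g x - h x) (\<lambda>x. g x - h x) = ip g g - 2 * ip g h + ip h h"
  using ip_diff_left[of g h] ip_diff_right[of g h] diff_in ip_commute[of g h] by simp

lemma ip_diff_self_triangle:
  assumes "a \<in> H" "b \<in> H" "c \<in> H"
  shows "ip (\<lambda>x. a x - c x) (\<lambda>x. a x - c x)
    \<le> 2 * ip (\<lambda>x. a x - b x) (\<lambda>x. a x - b x) + 2 * ip (\<lambda>x. b x - c x) (\<lambda>x. b x - c x)"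
proof -
  define u where "u = (\<lambda>x. a x - b x)"
  define v where "v = (\<lambda>x. b x - c x)"
  have u: "u \<in> H" and v: "v \<in> H"
    using assms diff_in by (auto simp: u_def v_def)
  have "(\<lambda>x. a x - c x) = (\<lambda>x. u x + v x)"
    by (auto simp: u_def v_def)
  then have "ip (\<lambda>x. a x - c x) (\<lambda>x. a x - c x) = ip u u + 2 * ip u v + ip v v"
    using ip_add_left[OF u v add_in[OF u v]] ip_add_right[OF u v] ip_commute[OF u v] u v by simp
  also have "\<dots> \<le> 2 * ip u u + 2 * ip v v"
    using ip_self_nonneg[OF diff_in[OF u v]] ip_diff_self[OF u v] by simp
  finally show ?thesis
    by (simp add: u_def v_def)
qed

lemma Cauchy_Schwarz:
  assumes g: "g \<in> H" and h: "h \<in> H"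
  shows "(ip g h)\<^sup>2 \<le> ip g g * ip h h"
proof (cases "ip h h = 0")
  case True
  then show ?thesis
    using ip_self_eq_0[OF h] ip_zero_right[OF g] by simp
next
  case False
  then have hh: "ip h h > 0"
    using ip_self_nonneg[OF h] by simp
  define t where "t = ip g h / ip h h"
  have "0 \<le> ip (\<lambda>x. g x - t * h x) (\<lambda>x. g x - t * h x)"
    using ip_self_nonneg diff_in scale_in g h by blast
  also have "\<dots> = ip g g - 2 * t * ip g h + t * t * ip h h"
    using ip_diff_self[OF g scale_in[OF h]] ip_scale_right[OF h g]
      ip_scale_left[OF h scale_in[OF h]] ip_scale_right[OF h h] by simp
  also have "\<dots> = ip g g - (ip g h)\<^sup>2 / ip h h"
    using hh by (simp add: t_def field_simps power2_eq_square)
  finally show ?thesis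
    using hh by (simp add: field_simps)
qed

lemma rnorm_squared: "g \<in> H \<Longrightarrow> (rnorm ip g)\<^sup>2 = ip g g"
  by (simp add: rnorm_def ip_self_nonneg)

lemma lincomb_in: "finite I \<Longrightarrow> \<forall>i\<in>I. v i \<in> H \<Longrightarrow> lincomb I c v \<in> H"
proof (induction I rule: finite_induct)
  case empty
  then show ?case by (simp add: lincomb_def zero_in)
next
  case (insert i I)
  then show ?case
    using add_in[OF scale_in[of "v i" "c i"], of "lincomb I c v"] by (simp add: lincomb_def)
qed

lemma lspan_subset_H: "finite I \<Longrightarrow> \<forall>i\<in>I. v i \<in> H \<Longrightarrow> lspan I v \<subseteq> H"
  using lincomb_in by (auto simp: lspan_def)

lemma ip_lincomb_left:
  "finite I \<Longrightarrow> \<forall>i\<in>I. v i \<in> H \<Longrightarrow> u \<in> H \<Longrightarrow> ip (lincomb I c v) u = (\<Sum>i\<in>I. c i * ip (v i) u)"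
proof (induction I rule: finite_induct)
  case empty
  then show ?case by (simp add: lincomb_def ip_zero_left)
next
  case (insert i I)
  have "ip (lincomb (insert i I) c v) u = ip (\<lambda>x. c i * v i x + lincomb I c v x) u"
    using insert by (simp add: lincomb_def)
  also have "\<dots> = c i * ip (v i) u + ip (lincomb I c v) u"
    using insert ip_add_left[OF scale_in[of "v i" "c i"] lincomb_in[of I v c] \<open>u \<in> H\<close>]
      ip_scale_left[of "v i" u "c i"] by simp
  finally show ?case
    using insert by simp
qed

lemma ip_lincomb_right:
  assumes "finite I" "\<forall>i\<in>I. v i \<in> H" "u \<in> H"
  shows "ip u (lincomb I c v) = (\<Sum>i\<in>I. c i * ip u (v i))"
proof -
  have "ip u (lincomb I c v) = ip (lincomb I c v) u"
    using assms by (simp add: ip_commute lincomb_in)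
  also have "\<dots> = (\<Sum>i\<in>I. c i * ip u (v i))"
    using assms by (simp add: ip_lincomb_left ip_commute[of u])
  finally show ?thesis .
qed

end

section \<open>Orthonormal systems and orthogonal projection\<close>

context fun_hilbert_space
begin

definition orthonormal :: "nat \<Rightarrow> (nat \<Rightarrow> 'a \<Rightarrow> real) \<Rightarrow> bool" where
  "orthonormal m e \<longleftrightarrow>
     (\<forall>j<m. e j \<in> H) \<and> (\<forall>i<m. \<forall>j<m. ip (e i) (e j) = (if i = j then 1 else 0))"

definition proj :: "nat \<Rightarrow> (nat \<Rightarrow> 'a \<Rightarrow> real) \<Rightarrow> ('a \<Rightarrow> real) \<Rightarrow> 'a \<Rightarrow> real" where
  "proj m e g = lincomb {..<m} (\<lambda>j. ip g (e j)) e"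

lemma orthonormal_extend:
  assumes e: "orthonormal m e" and u: "u \<in> H" "ip u u = 1" "\<forall>j<m. ip u (e j) = 0"
  shows "orthonormal (Suc m) (e(m := u))"
proof -
  have "ip (e j) u = 0" if "j < m" for j
    using u that e ip_commute[of u "e j"] by (simp add: orthonormal_def)
  then show ?thesis
    using e u by (auto simp: orthonormal_def less_Suc_eq)
qed

context
  fixes m e assumes e: "orthonormal m e"
begin

lemma orthonormal_in: "j < m \<Longrightarrow> e j \<in> H"
  using e by (simp add: orthonormal_def)

lemma lspan_orthonormal_subset_H: "lspan {..<m} e \<subseteq> H"
  using lspan_subset_H orthonormal_in by blast

lemma ip_lincomb_orthonormal:
  assumes "j < m"
  shows "ip (lincomb {..<m} c e) (e j) = c j"
proof -
  have "ip (lincomb {..<m} c e) (e j) = (\<Sum>i<m. c i * ip (e i) (e j))"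
    using assms by (simp add: ip_lincomb_left orthonormal_in)
  also have "\<dots> = (\<Sum>i<m. if i = j then c i else 0)"
    using e assms by (intro sum.cong) (auto simp: orthonormal_def)
  finally show ?thesis
    using assms by simp
qed

lemma ip_lincomb_lincomb_orthonormal:
  "ip (lincomb {..<m} c e) (lincomb {..<m} d e) = (\<Sum>j<m. c j * d j)"
  using ip_lincomb_orthonormal
  by (simp add: ip_lincomb_right orthonormal_in lincomb_in mult.commute)

lemma proj_residual_orthogonal:
  assumes g: "g \<in> H" and h: "h \<in> lspan {..<m} e"
  shows "ip (\<lambda>x. g x - proj m e g x) h = 0"
proof -
  obtain c where c: "h = lincomb {..<m} c e"
    using h by (auto simp: lspan_def)
  have pe: "proj m e g \<in> H"
    by (simp add: proj_def lincomb_in orthonormal_in)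
  have "ip (\<lambda>x. g x - proj m e g x) (e j) = 0" if "j < m" for j
    using that ip_diff_left[OF g pe orthonormal_in[OF that]] ip_lincomb_orthonormal[OF that]
      ip_commute[OF g orthonormal_in[OF that]]
    by (simp add: proj_def)
  then show ?thesis
    unfolding c by (simp add: ip_lincomb_right orthonormal_in diff_in[OF g pe])
qed

lemma ip_proj:
  assumes g: "g \<in> H" and h: "h \<in> lspan {..<m} e"
  shows "ip h (proj m e g) = ip h g"
proof -
  have pe: "proj m e g \<in> H" and hH: "h \<in> H"
    using h lspan_orthonormal_subset_H by (auto simp: proj_def lincomb_in orthonormal_in)
  have "ip h (\<lambda>x. g x - proj m e g x) = 0"
    using proj_residual_orthogonal[OF g h] ip_commute[OF hH diff_in[OF g pe]] by simp
  then show ?thesis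
    using ip_diff_right[OF g pe hH] by simp
qed

lemma ip_proj_self_le:
  assumes g: "g \<in> H"
  shows "ip (proj m e g) (proj m e g) \<le> ip g g"
proof -
  have pl: "proj m e g \<in> lspan {..<m} e"
    by (simp add: proj_def)
  then have pe: "proj m e g \<in> H"
    using lspan_orthonormal_subset_H by blast
  have "ip (proj m e g) g = ip (proj m e g) (proj m e g)"
    using ip_proj[OF g pl] by simp
  moreover have "0 \<le> ip (\<lambda>x. g x - proj m e g x) (\<lambda>x. g x - proj m e g x)"
    using ip_self_nonneg diff_in[OF g pe] by blast
  ultimately show ?thesis
    using ip_diff_self[OF g pe] ip_commute[OF g pe] by simp
qed

end

lemma orthonormal_extend_residual:
  assumes e: "orthonormal m e" and a: "a \<in> H"
    and d: "d = (\<lambda>x. a x - proj m e a x)" and "ip d d \<noteq> 0"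
  shows "orthonormal (Suc m) (e(m := (\<lambda>x. d x / sqrt (ip d d))))"
proof -
  define n where "n = sqrt (ip d d)"
  have "proj m e a \<in> H"
    using lspan_orthonormal_subset_H[OF e] by (auto simp: proj_def)
  then have dH: "d \<in> H"
    using d a diff_in by simp
  then have n: "n > 0" "n * n = ip d d"
    using \<open>ip d d \<noteq> 0\<close> ip_self_nonneg[OF dH] by (auto simp: n_def)
  have uH: "(\<lambda>x. d x / n) \<in> H"
    using dH by (rule divide_in)
  have "ip (\<lambda>x. d x / n) (\<lambda>x. d x / n) = 1"
    using ip_divide_left[OF dH uH] ip_divide_left[OF dH dH] ip_commute[OF dH uH] n
      \<open>ip d d \<noteq> 0\<close>
    by simp
  moreover have "ip (\<lambda>x. d x / n) (e j) = 0" if "j < m" for j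
    using ip_divide_left[OF dH orthonormal_in[OF e that]]
      proj_residual_orthogonal[OF e a generator_in_lspan[of "{..<m}" j e]] that d
    by simp
  ultimately show ?thesis
    using orthonormal_extend[OF e uH] by (simp add: n_def)
qed

lemma lspan_extend_residual:
  assumes "finite I" and span: "lspan {..<m} e = lspan I r"
    and p: "p \<in> lspan {..<m} e" and "n \<noteq> 0"
  shows "lspan {..<Suc m} (e(m := (\<lambda>x. (r a x - p x) / n))) = lspan (insert a I) r"
proof -
  define e' where "e' = e(m := (\<lambda>x. (r a x - p x) / n))"
  have subset: "lspan I r \<subseteq> lspan (insert a I) r"
    using \<open>finite I\<close> by (intro lspan_mono) auto
  have old: "lspan {..<m} e \<subseteq> lspan {..<Suc m} e'"
    using lspan_cong[of "{..<m}" e e'] lspan_mono[of "{..<Suc m}" "{..<m}" e']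
    by (auto simp: e'_def)
  have "(\<lambda>x. (r a x - p x) / n) = (\<lambda>x. (1 / n) * (r a x + (-1) * p x))"
    by (auto simp: field_simps)
  also have "\<dots> \<in> lspan (insert a I) r"
    using \<open>finite I\<close> p span subset by (intro lspan_scale lspan_add) (auto simp: generator_in_lspan)
  finally have "lspan {..<Suc m} e' \<subseteq> lspan (insert a I) r"
    using span subset by (intro lspan_subset) (auto simp: e'_def less_Suc_eq generator_in_lspan)
  moreover have "r a = (\<lambda>x. p x + n * e' m x)"
    using \<open>n \<noteq> 0\<close> by (auto simp: e'_def)
  then have "r a \<in> lspan {..<Suc m} e'"
    using old p by (auto intro!: lspan_add lspan_scale generator_in_lspan)
  then have "lspan (insert a I) r \<subseteq> lspan {..<Suc m} e'"
    using old span generator_in_lspan[OF \<open>finite I\<close>] by (intro lspan_subset) auto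
  ultimately show ?thesis
    by (simp add: e'_def)
qed

lemma Gram_Schmidt_step:
  assumes e: "orthonormal m e" and span: "lspan {..<m} e = lspan I r"
    and "finite I" and ra: "r a \<in> H"
  shows "\<exists>m' e'. orthonormal m' e' \<and> lspan {..<m'} e' = lspan (insert a I) r"
proof -
  define p where "p = proj m e (r a)"
  define d where "d = (\<lambda>x. r a x - p x)"
  have p_span: "p \<in> lspan {..<m} e"
    by (simp add: p_def proj_def)
  show ?thesis
  proof (cases "ip d d = 0")
    case True
    then have "r a = p"
      using ip_self_eq_0 p_span lspan_orthonormal_subset_H[OF e] ra diff_in
      by (fastforce simp: d_def fun_eq_iff)
    then have "lspan (insert a I) r \<subseteq> lspan I r"
      using \<open>finite I\<close> p_span span by (intro lspan_subset) (auto simp: generator_in_lspan)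
    moreover have "lspan I r \<subseteq> lspan (insert a I) r"
      using \<open>finite I\<close> by (intro lspan_mono) auto
    ultimately show ?thesis
      using e span by blast
  next
    case False
    then have "orthonormal (Suc m) (e(m := (\<lambda>x. (r a x - p x) / sqrt (ip d d))))"
      using orthonormal_extend_residual[OF e ra _ False] by (simp add: d_def p_def)
    moreover have "sqrt (ip d d) \<noteq> 0"
      using False by simp
    ultimately show ?thesis
      using lspan_extend_residual[OF \<open>finite I\<close> span p_span] by blast
  qed
qed

lemma Gram_Schmidt:
  "finite I \<Longrightarrow> \<forall>i\<in>I. r i \<in> H \<Longrightarrow> \<exists>m e. orthonormal m e \<and> lspan {..<m} e = lspan I r"
proof (induction I rule: finite_induct)
  case empty
  have "lspan {} r = lspan {..<0} (\<lambda>j x. 0)"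
    by (simp add: lspan_def lincomb_def)
  then show ?case
    by (auto simp: orthonormal_def)
next
  case (insert a I)
  then show ?case
    using Gram_Schmidt_step by auto
qed

end

section \<open>Minimising a linear functional under norm and data constraints\<close>

lemma compact_box: "compact (Pi UNIV (\<lambda>j::nat. if j < m then {-G..G} else {0::real}))"
proof -
  have "compactin (product_topology (\<lambda>i. euclidean) UNIV)
      (PiE UNIV (\<lambda>j::nat. if j < m then {-G..G} else {0::real}))"
    by (subst compactin_PiE) auto
  then show ?thesis
    by (simp add: euclidean_product_topology PiE_UNIV_domain)
qed

text \<open>\<open>z i\<close> represents the \<open>i\<close>-th data functional; for an RKHS it is the kernel section
  at the \<open>i\<close>-th data point, so that \<open>ip (z i) g = g (th i)\<close>.\<close>

locale fit_problem = fun_hilbert_space H ip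
  for H :: "('a \<Rightarrow> real) set" and ip +
  fixes z :: "nat \<Rightarrow> 'a \<Rightarrow> real" and N :: nat and y :: "nat \<Rightarrow> real" and \<delta> \<Gamma> :: real
begin

definition feasible :: "('a \<Rightarrow> real) \<Rightarrow> bool" where
  "feasible g \<longleftrightarrow> g \<in> H \<and> ip g g \<le> \<Gamma>\<^sup>2 \<and> (\<forall>i<N. \<bar>ip (z i) g - y i\<bar> \<le> \<delta>)"

lemma feasible_proj:
  assumes e: "orthonormal m e" and z: "\<forall>i<N. z i \<in> lspan {..<m} e" and g: "feasible g"
  shows "feasible (proj m e g)"
proof -
  have gH: "g \<in> H"
    using g by (simp add: feasible_def)
  have "proj m e g \<in> H"
    using lspan_orthonormal_subset_H[OF e] by (auto simp: proj_def)
  then show ?thesis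
    using g ip_proj_self_le[OF e gH] ip_proj[OF e gH] z by (auto simp: feasible_def)
qed

context
  fixes m e assumes e: "orthonormal m e" and z: "\<forall>i<N. z i \<in> lspan {..<m} e"
begin

lemma feasible_lincomb_orthonormal_iff:
  "feasible (lincomb {..<m} c e) \<longleftrightarrow>
     (\<Sum>j<m. (c j)\<^sup>2) \<le> \<Gamma>\<^sup>2 \<and> (\<forall>i<N. \<bar>(\<Sum>j<m. c j * ip (z i) (e j)) - y i\<bar> \<le> \<delta>)"
proof -
  have "z i \<in> H" if "i < N" for i
    using z that lspan_orthonormal_subset_H[OF e] by auto
  then show ?thesis
    by (simp add: feasible_def ip_lincomb_lincomb_orthonormal[OF e] ip_lincomb_right
        lincomb_in orthonormal_in[OF e] power2_eq_square)
qed

lemma compact_feasible_coefficients: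
  "compact {c. (\<forall>j\<ge>m. c j = 0) \<and> feasible (lincomb {..<m} c e)}"
proof -
  define B :: "(nat \<Rightarrow> real) set" where "B = Pi UNIV (\<lambda>j. if j < m then {-\<bar>\<Gamma>\<bar>..\<bar>\<Gamma>\<bar>} else {0})"
  define K :: "(nat \<Rightarrow> real) set" where "K = {c. (\<Sum>j<m. (c j)\<^sup>2) \<le> \<Gamma>\<^sup>2}
    \<inter> (\<Inter>i<N. {c. \<bar>(\<Sum>j<m. c j * ip (z i) (e j)) - y i\<bar> \<le> \<delta>})"
  have "continuous_on UNIV (\<lambda>c::nat \<Rightarrow> real. \<Sum>j<m. (c j)\<^sup>2)"
    and "\<And>i. continuous_on UNIV (\<lambda>c::nat \<Rightarrow> real. \<Sum>j<m. c j * ip (z i) (e j))"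
    by (intro continuous_intros continuous_on_product_coordinates)+
  then have "closed K"
    unfolding K_def by (intro closed_Int closed_INT ballI closed_Collect_le continuous_intros) auto
  have in_B: "c \<in> B" if "\<forall>j\<ge>m. c j = 0" "(\<Sum>j<m. (c j)\<^sup>2) \<le> \<Gamma>\<^sup>2" for c
  proof -
    have bound: "\<bar>c j\<bar> \<le> \<bar>\<Gamma>\<bar>" if "j < m" for j
    proof -
      have "(c j)\<^sup>2 \<le> (\<Sum>j<m. (c j)\<^sup>2)"
        using that by (intro member_le_sum) auto
      then show ?thesis
        using \<open>(\<Sum>j<m. (c j)\<^sup>2) \<le> \<Gamma>\<^sup>2\<close> by (simp add: abs_le_square_iff)
    qed
    have "c j \<in> (if j < m then {-\<bar>\<Gamma>\<bar>..\<bar>\<Gamma>\<bar>} else {0})" for j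
      using bound[of j] that(1) by (cases "j < m") (auto simp: abs_le_iff)
    then show ?thesis
      by (simp add: B_def)
  qed
  have B_support: "c j = 0" if "c \<in> B" "j \<ge> m" for c j
    using Pi_mem[OF that(1)[unfolded B_def], of j] that(2) by simp
  have "{c. (\<forall>j\<ge>m. c j = 0) \<and> feasible (lincomb {..<m} c e)} = B \<inter> K"
  proof (intro equalityI subsetI)
    fix c assume "c \<in> {c. (\<forall>j\<ge>m. c j = 0) \<and> feasible (lincomb {..<m} c e)}"
    then show "c \<in> B \<inter> K"
      using in_B by (simp add: K_def feasible_lincomb_orthonormal_iff)
  next
    fix c assume "c \<in> B \<inter> K"
    then show "c \<in> {c. (\<forall>j\<ge>m. c j = 0) \<and> feasible (lincomb {..<m} c e)}"
      using B_support by (simp add: K_def feasible_lincomb_orthonormal_iff)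
  qed
  then show ?thesis
    using compact_Int_closed[OF compact_box \<open>closed K\<close>] by (simp add: B_def)
qed

text \<open>Projection onto the span keeps feasibility and the objective, so it suffices to
  minimise over the compact set of feasible coefficient vectors.\<close>

lemma ip_min_attained_orthonormal:
  assumes w: "w \<in> lspan {..<m} e" and "feasible g0"
  shows "\<exists>h\<in>lspan {..<m} e. feasible h \<and> (\<forall>g. feasible g \<longrightarrow> ip w h \<le> ip w g)"
proof -
  define C where "C = {c. (\<forall>j\<ge>m. c j = 0) \<and> feasible (lincomb {..<m} c e)}"
  define coeffs where "coeffs g = (\<lambda>j. if j < m then ip g (e j) else 0)" for g
  have proj: "lincomb {..<m} (coeffs g) e = proj m e g" for g
    unfolding proj_def lincomb_def coeffs_def by (intro ext sum.cong) auto
  have coeffs_C: "coeffs g \<in> C" if "feasible g" for g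
    using feasible_proj[OF e z that] proj by (simp add: C_def coeffs_def)
  have wH: "w \<in> H"
    using w lspan_orthonormal_subset_H[OF e] by auto
  have "continuous_on UNIV (\<lambda>c. \<Sum>j<m. c j * ip w (e j))"
    by (intro continuous_intros continuous_on_product_coordinates)
  from continuous_on_subset[OF this subset_UNIV]
  have "continuous_on C (\<lambda>c. ip w (lincomb {..<m} c e))"
    using wH by (simp add: ip_lincomb_right orthonormal_in[OF e])
  then obtain cs where cs: "cs \<in> C" "\<And>c. c \<in> C \<Longrightarrow> ip w (lincomb {..<m} cs e) \<le> ip w (lincomb {..<m} c e)"
    using compact_feasible_coefficients coeffs_C[OF \<open>feasible g0\<close>]
      continuous_attains_inf[of C "\<lambda>c. ip w (lincomb {..<m} c e)"]
    by (auto simp: C_def)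
  have "ip w (lincomb {..<m} cs e) \<le> ip w g" if g: "feasible g" for g
    using cs(2)[OF coeffs_C[OF g]] ip_proj[OF e _ w] g by (simp add: proj feasible_def)
  then show ?thesis
    using cs(1) by (auto simp: C_def)
qed

end

lemma ip_min_attained:
  assumes "finite I" "\<forall>i\<in>I. r i \<in> H" "w \<in> lspan I r"
    and "\<forall>i<N. z i \<in> lspan I r" and "feasible g0"
  shows "\<exists>h\<in>lspan I r. feasible h \<and> (\<forall>g. feasible g \<longrightarrow> ip w h \<le> ip w g)"
  using assms Gram_Schmidt ip_min_attained_orthonormal by metis

definition socp_feasible :: "'i set \<Rightarrow> ('i \<Rightarrow> 'i \<Rightarrow> real) \<Rightarrow> (nat \<Rightarrow> 'i) \<Rightarrow> ('i \<Rightarrow> real) \<Rightarrow> bool" where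
  "socp_feasible I M dat \<beta> \<longleftrightarrow>
     quadf I M \<beta> \<le> \<Gamma>\<^sup>2 \<and> (\<forall>i<N. \<bar>mrow I M (dat i) \<beta> - y i\<bar> \<le> \<delta>)"

context
  fixes I :: "'i set" and r :: "'i \<Rightarrow> 'a \<Rightarrow> real" and M :: "'i \<Rightarrow> 'i \<Rightarrow> real"
  assumes fin: "finite I" and r: "\<And>i. r i \<in> H"
    and Gram: "\<And>p q. M p q = ip (r p) (r q)"
begin

lemma mrow_Gram: "mrow I M p \<beta> = ip (r p) (lincomb I \<beta> r)"
  using fin r Gram by (simp add: mrow_def ip_lincomb_right mult.commute)

lemma quadf_Gram: "quadf I M \<beta> = ip (lincomb I \<beta> r) (lincomb I \<beta> r)"
proof -
  have "quadf I M \<beta> = (\<Sum>p\<in>I. \<beta> p * mrow I M p \<beta>)"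
    by (simp add: quadf_def mrow_def sum_distrib_left mult.assoc)
  also have "\<dots> = ip (lincomb I \<beta> r) (lincomb I \<beta> r)"
    using fin r by (simp add: mrow_Gram ip_lincomb_left lincomb_in)
  finally show ?thesis .
qed

lemma linf_Gram: "linf I c M \<beta> = ip (lincomb I c r) (lincomb I \<beta> r)"
  using fin r by (simp add: linf_def mrow_Gram ip_lincomb_left lincomb_in)

lemma socp_feasible_iff:
  assumes "\<forall>i<N. dat i \<in> I \<and> r (dat i) = z i"
  shows "socp_feasible I M dat \<beta> \<longleftrightarrow> feasible (lincomb I \<beta> r)"
  using assms fin r by (simp add: socp_feasible_def feasible_def quadf_Gram mrow_Gram lincomb_in)

lemma socp_min_eq_feasible_min:
  assumes dat: "\<forall>i<N. dat i \<in> I \<and> r (dat i) = z i"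
    and J: "\<And>g. g \<in> H \<Longrightarrow> ip (lincomb I c r) g = J g" and "feasible g0"
  shows "\<exists>v. (\<exists>\<beta>. socp_feasible I M dat \<beta> \<and> linf I c M \<beta> = v) \<and>
             (\<forall>\<beta>. socp_feasible I M dat \<beta> \<longrightarrow> v \<le> linf I c M \<beta>) \<and>
             (\<exists>g. feasible g \<and> J g = v) \<and> (\<forall>g. feasible g \<longrightarrow> v \<le> J g)"
proof -
  have "\<forall>i<N. z i \<in> lspan I r"
    using dat fin generator_in_lspan by metis
  then obtain h where "h \<in> lspan I r" and h: "feasible h"
    and h_min: "\<forall>g. feasible g \<longrightarrow> ip (lincomb I c r) h \<le> ip (lincomb I c r) g"
    using ip_min_attained[OF fin _ lincomb_in_lspan] r \<open>feasible g0\<close> by blast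
  then obtain \<beta> where \<beta>: "h = lincomb I \<beta> r"
    by (auto simp: lspan_def)
  have obj: "linf I c M \<beta>' = J (lincomb I \<beta>' r)" for \<beta>'
    using J fin r by (simp add: linf_Gram lincomb_in)
  have "feasible g \<Longrightarrow> J h \<le> J g" for g
    using h_min h J by (auto simp: feasible_def)
  then show ?thesis
    using h dat by (intro exI[of _ "J h"]) (auto simp: \<beta> obj socp_feasible_iff)
qed

lemma socp_max_eq_feasible_max:
  assumes dat: "\<forall>i<N. dat i \<in> I \<and> r (dat i) = z i"
    and J: "\<And>g. g \<in> H \<Longrightarrow> ip (lincomb I c r) g = J g" and "feasible g0"
  shows "\<exists>v. (\<exists>\<beta>. socp_feasible I M dat \<beta> \<and> linf I c M \<beta> = v) \<and>
             (\<forall>\<beta>. socp_feasible I M dat \<beta> \<longrightarrow> linf I c M \<beta> \<le> v) \<and>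
             (\<exists>g. feasible g \<and> J g = v) \<and> (\<forall>g. feasible g \<longrightarrow> J g \<le> v)"
proof -
  have "\<And>g. g \<in> H \<Longrightarrow> ip (lincomb I (\<lambda>p. - c p) r) g = - J g"
    using J fin r by (simp add: ip_lincomb_left sum_negf)
  from socp_min_eq_feasible_min[OF dat this \<open>feasible g0\<close>]
  obtain v where "(\<exists>\<beta>. socp_feasible I M dat \<beta> \<and> linf I (\<lambda>p. - c p) M \<beta> = v) \<and>
             (\<forall>\<beta>. socp_feasible I M dat \<beta> \<longrightarrow> v \<le> linf I (\<lambda>p. - c p) M \<beta>) \<and>
             (\<exists>g. feasible g \<and> - J g = v) \<and> (\<forall>g. feasible g \<longrightarrow> v \<le> - J g)"
    by blast
  moreover have "linf I (\<lambda>p. - c p) M \<beta> = - linf I c M \<beta>" for \<beta>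
    by (simp add: linf_def sum_negf)
  ultimately show ?thesis
    by (intro exI[of _ "- v"]) force
qed

end

end

section \<open>Reproducing kernels and their derivatives\<close>

locale rkhs = fun_hilbert_space H ip
  for k :: "real^'n \<Rightarrow> real^'n \<Rightarrow> real" and H :: "(real^'n \<Rightarrow> real) set" and ip +
  assumes kernel_section_in: "(\<lambda>x. k x y) \<in> H"
    and reproducing: "g \<in> H \<Longrightarrow> ip g (\<lambda>x. k x y) = g y"
begin

lemma reproducing_left: "g \<in> H \<Longrightarrow> ip (\<lambda>x. k x y) g = g y"
  using reproducing ip_commute[OF _ kernel_section_in] by simp

lemma ip_kernel_sections: "ip (\<lambda>x. k x a) (\<lambda>x. k x b) = k a b"
  using reproducing_left[OF kernel_section_in, of a b] reproducing[OF kernel_section_in, of b a]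
    ip_commute[OF kernel_section_in kernel_section_in, of a b]
  by simp

lemma kernel_commute: "k a b = k b a"
  using ip_kernel_sections[of a b] ip_kernel_sections[of b a]
    ip_commute[OF kernel_section_in kernel_section_in, of a b]
  by simp

end

lemma is_RKHS_imp_rkhs:
  assumes "is_RKHS k H ip"
  shows "rkhs k H ip"
proof -
  note R = assms[unfolded is_RKHS_def]
  have scale: "\<forall>g\<in>H. \<forall>c. (\<lambda>x. c * g x) \<in> H" and k0: "(\<lambda>x. k x 0) \<in> H"
    using R by blast+
  have "(\<lambda>x. 0 * k x 0) \<in> H"
    using scale[rule_format, OF k0, of 0] .
  then have "(\<lambda>x. 0) \<in> H"
    by simp
  then show ?thesis
    by (intro rkhs.intro fun_hilbert_space.intro rkhs_axioms.intro) (use R in blast)+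
qed

locale rkhs_C2 = rkhs +
  assumes C2: "C2 (\<lambda>z. k (fst z) (snd z))"
begin

definition diff_quot where
  "diff_quot \<theta> e t = (\<lambda>x. (k x (\<theta> + t *\<^sub>R e) - k x \<theta>) / t)"

lemma diff_quot_in: "diff_quot \<theta> e t \<in> H"
  unfolding diff_quot_def by (intro divide_in diff_in kernel_section_in)

lemma ip_diff_quot: "g \<in> H \<Longrightarrow> ip (diff_quot \<theta> e t) g = (g (\<theta> + t *\<^sub>R e) - g \<theta>) / t"
  unfolding diff_quot_def
  by (simp add: ip_divide_left ip_diff_left diff_in kernel_section_in reproducing_left)

lemma ip_diff_quot_diff_quot:
  "s \<noteq> 0 \<Longrightarrow> t \<noteq> 0 \<Longrightarrow> ip (diff_quot \<theta> e s) (diff_quot \<theta> e t) =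
     (k (\<theta> + s *\<^sub>R e) (\<theta> + t *\<^sub>R e) - k \<theta> (\<theta> + t *\<^sub>R e) - k (\<theta> + s *\<^sub>R e) \<theta> + k \<theta> \<theta>) / (s * t)"
  by (simp add: ip_diff_quot diff_quot_in) (simp add: diff_quot_def field_simps)

text \<open>The inner products of difference quotients are second difference quotients of \<open>k\<close>,
  which converge by the \<open>C2\<close> hypothesis.\<close>

lemma diff_quot_Cauchy:
  assumes "\<rho> > 0"
  shows "\<exists>\<eta>>0. \<forall>s t. s \<noteq> 0 \<longrightarrow> t \<noteq> 0 \<longrightarrow> \<bar>s\<bar> < \<eta> \<longrightarrow> \<bar>t\<bar> < \<eta> \<longrightarrow>
     ip (\<lambda>x. diff_quot \<theta> e s x - diff_quot \<theta> e t x) (\<lambda>x. diff_quot \<theta> e s x - diff_quot \<theta> e t x) < \<rho>"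
proof -
  have "\<exists>c. \<forall>\<epsilon>>0. \<exists>\<eta>>0. \<forall>s t. s \<noteq> 0 \<longrightarrow> t \<noteq> 0 \<longrightarrow> \<bar>s\<bar> < \<eta> \<longrightarrow> \<bar>t\<bar> < \<eta> \<longrightarrow>
      \<bar>ip (diff_quot \<theta> e s) (diff_quot \<theta> e t) - c\<bar> < \<epsilon>"
    using second_difference_quotient_converges[OF C2, of "(\<theta>, \<theta>)" "(0, e)" "(e, 0)"]
    by (simp add: ip_diff_quot_diff_quot)
  then obtain c where c: "\<forall>\<epsilon>>0. \<exists>\<eta>>0. \<forall>s t. s \<noteq> 0 \<longrightarrow> t \<noteq> 0 \<longrightarrow> \<bar>s\<bar> < \<eta> \<longrightarrow> \<bar>t\<bar> < \<eta> \<longrightarrow>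
      \<bar>ip (diff_quot \<theta> e s) (diff_quot \<theta> e t) - c\<bar> < \<epsilon>"
    by blast
  then obtain \<eta> where "\<eta> > 0" and \<eta>: "\<And>s t. s \<noteq> 0 \<Longrightarrow> t \<noteq> 0 \<Longrightarrow> \<bar>s\<bar> < \<eta> \<Longrightarrow> \<bar>t\<bar> < \<eta> \<Longrightarrow>
      \<bar>ip (diff_quot \<theta> e s) (diff_quot \<theta> e t) - c\<bar> < \<rho> / 4"
    using \<open>\<rho> > 0\<close> by (metis zero_less_divide_iff zero_less_numeral)
  have "ip (\<lambda>x. diff_quot \<theta> e s x - diff_quot \<theta> e t x) (\<lambda>x. diff_quot \<theta> e s x - diff_quot \<theta> e t x) < \<rho>"
    if "s \<noteq> 0" "t \<noteq> 0" "\<bar>s\<bar> < \<eta>" "\<bar>t\<bar> < \<eta>" for s t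
  proof -
    have "ip (\<lambda>x. diff_quot \<theta> e s x - diff_quot \<theta> e t x) (\<lambda>x. diff_quot \<theta> e s x - diff_quot \<theta> e t x)
        = ip (diff_quot \<theta> e s) (diff_quot \<theta> e s) - 2 * ip (diff_quot \<theta> e s) (diff_quot \<theta> e t)
          + ip (diff_quot \<theta> e t) (diff_quot \<theta> e t)"
      by (rule ip_diff_self[OF diff_quot_in diff_quot_in])
    with \<eta>[of s s] \<eta>[of s t] \<eta>[of t t] that show ?thesis
      by arith
  qed
  then show ?thesis
    using \<open>\<eta> > 0\<close> by blast
qed

lemma diff_quot_sequence_converges:
  "\<exists>l\<in>H. (\<lambda>n. ip (\<lambda>x. diff_quot \<theta> e (inverse (Suc n)) x - l x)
                  (\<lambda>x. diff_quot \<theta> e (inverse (Suc n)) x - l x)) \<longlonglongrightarrow> 0"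
proof -
  define S where "S n = diff_quot \<theta> e (inverse (Suc n))" for n
  have "\<exists>M. \<forall>m\<ge>M. \<forall>n\<ge>M. rnorm ip (\<lambda>x. S m x - S n x) < \<epsilon>" if "\<epsilon> > 0" for \<epsilon>
  proof -
    obtain \<eta> where "\<eta> > 0" and \<eta>: "\<And>s t. s \<noteq> 0 \<Longrightarrow> t \<noteq> 0 \<Longrightarrow> \<bar>s\<bar> < \<eta> \<Longrightarrow> \<bar>t\<bar> < \<eta> \<Longrightarrow>
        ip (\<lambda>x. diff_quot \<theta> e s x - diff_quot \<theta> e t x) (\<lambda>x. diff_quot \<theta> e s x - diff_quot \<theta> e t x) < \<epsilon>\<^sup>2"
      using diff_quot_Cauchy[of "\<epsilon>\<^sup>2" \<theta> e] \<open>\<epsilon> > 0\<close> by auto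
    obtain M where "\<forall>n\<ge>M. inverse (real (Suc n)) < \<eta>"
      using order_tendstoD(2)[OF LIMSEQ_inverse_real_of_nat \<open>\<eta> > 0\<close>]
      by (auto simp: eventually_sequentially)
    then have "rnorm ip (\<lambda>x. S m x - S n x) < \<epsilon>" if "m \<ge> M" "n \<ge> M" for m n
      unfolding rnorm_def using \<eta> that \<open>\<epsilon> > 0\<close>
      by (intro real_less_lsqrt) (simp_all add: S_def)
    then show ?thesis
      by blast
  qed
  then obtain l where l: "l \<in> H" and "(\<lambda>n. rnorm ip (\<lambda>x. S n x - l x)) \<longlonglongrightarrow> 0"
    using Cauchy_converges[of S] by (auto simp: S_def diff_quot_in)
  then have "(\<lambda>n. (rnorm ip (\<lambda>x. S n x - l x))\<^sup>2) \<longlonglongrightarrow> 0"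
    using tendsto_power[of _ 0 _ 2] by force
  then show ?thesis
    using l by (auto simp: rnorm_squared diff_in S_def diff_quot_in)
qed

lemma diff_quot_converges:
  "\<exists>l\<in>H. \<forall>\<rho>>0. \<exists>\<eta>>0. \<forall>t. t \<noteq> 0 \<longrightarrow> \<bar>t\<bar> < \<eta> \<longrightarrow>
     ip (\<lambda>x. diff_quot \<theta> e t x - l x) (\<lambda>x. diff_quot \<theta> e t x - l x) < \<rho>"
proof -
  define h where "h n = inverse (real (Suc n))" for n
  obtain l where l: "l \<in> H" and S_l: "(\<lambda>n. ip (\<lambda>x. diff_quot \<theta> e (h n) x - l x)
      (\<lambda>x. diff_quot \<theta> e (h n) x - l x)) \<longlonglongrightarrow> 0"
    using diff_quot_sequence_converges[of \<theta> e] by (auto simp: h_def)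
  have "\<exists>\<eta>>0. \<forall>t. t \<noteq> 0 \<longrightarrow> \<bar>t\<bar> < \<eta> \<longrightarrow>
      ip (\<lambda>x. diff_quot \<theta> e t x - l x) (\<lambda>x. diff_quot \<theta> e t x - l x) < \<rho>" if "\<rho> > 0" for \<rho>
  proof -
    obtain \<eta> where "\<eta> > 0" and \<eta>: "\<And>s t. s \<noteq> 0 \<Longrightarrow> t \<noteq> 0 \<Longrightarrow> \<bar>s\<bar> < \<eta> \<Longrightarrow> \<bar>t\<bar> < \<eta> \<Longrightarrow>
        ip (\<lambda>x. diff_quot \<theta> e s x - diff_quot \<theta> e t x) (\<lambda>x. diff_quot \<theta> e s x - diff_quot \<theta> e t x) < \<rho> / 4"
      using diff_quot_Cauchy[of "\<rho> / 4" \<theta> e] \<open>\<rho> > 0\<close> by auto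
    have "\<forall>\<^sub>F n in sequentially. h n < \<eta> \<and>
        ip (\<lambda>x. diff_quot \<theta> e (h n) x - l x) (\<lambda>x. diff_quot \<theta> e (h n) x - l x) < \<rho> / 4"
      using order_tendstoD(2)[OF LIMSEQ_inverse_real_of_nat \<open>\<eta> > 0\<close>]
        order_tendstoD(2)[OF S_l, of "\<rho> / 4"] \<open>\<rho> > 0\<close>
      by (simp add: eventually_conj_iff h_def)
    then obtain n where n: "h n < \<eta>"
      "ip (\<lambda>x. diff_quot \<theta> e (h n) x - l x) (\<lambda>x. diff_quot \<theta> e (h n) x - l x) < \<rho> / 4"
      using eventually_sequentially by auto
    have "h n \<noteq> 0" "\<bar>h n\<bar> < \<eta>"
      using n(1) by (simp_all add: h_def)
    then have "ip (\<lambda>x. diff_quot \<theta> e t x - l x) (\<lambda>x. diff_quot \<theta> e t x - l x) < \<rho>"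
      if "t \<noteq> 0" "\<bar>t\<bar> < \<eta>" for t
      using ip_diff_self_triangle[OF diff_quot_in diff_quot_in l, of \<theta> e t \<theta> e "h n"]
        \<eta>[OF that(1) _ that(2)] n(2) by fastforce
    then show ?thesis
      using \<open>\<eta> > 0\<close> by blast
  qed
  then show ?thesis
    using l by blast
qed

lemma diff_quot_error_bound:
  assumes g: "g \<in> H" and l: "l \<in> H"
  shows "((g (\<theta> + t *\<^sub>R e) - g \<theta>) / t - ip l g)\<^sup>2
    \<le> ip (\<lambda>x. diff_quot \<theta> e t x - l x) (\<lambda>x. diff_quot \<theta> e t x - l x) * ip g g"
proof -
  have "(g (\<theta> + t *\<^sub>R e) - g \<theta>) / t - ip l g = ip (\<lambda>x. diff_quot \<theta> e t x - l x) g"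
    by (simp add: ip_diff_left[OF diff_quot_in l g] ip_diff_quot[OF g])
  then show ?thesis
    using Cauchy_Schwarz[OF diff_in[OF diff_quot_in l] g] by simp
qed

lemma directional_derivative_representer:
  "\<exists>l\<in>H. \<forall>g\<in>H. ((\<lambda>\<tau>. g (\<theta> + \<tau> *\<^sub>R e)) has_real_derivative ip l g) (at 0)"
proof -
  obtain l where l: "l \<in> H" and close: "\<And>\<rho>. \<rho> > 0 \<Longrightarrow> \<exists>\<eta>>0. \<forall>t. t \<noteq> 0 \<longrightarrow> \<bar>t\<bar> < \<eta> \<longrightarrow>
      ip (\<lambda>x. diff_quot \<theta> e t x - l x) (\<lambda>x. diff_quot \<theta> e t x - l x) < \<rho>"
    using diff_quot_converges by blast
  have "((\<lambda>\<tau>. g (\<theta> + \<tau> *\<^sub>R e)) has_real_derivative ip l g) (at 0)" if g: "g \<in> H" for g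
  proof -
    have "\<exists>\<eta>>0. \<forall>t. t \<noteq> 0 \<and> norm (t - 0) < \<eta> \<longrightarrow>
        norm ((g (\<theta> + t *\<^sub>R e) - g (\<theta> + 0 *\<^sub>R e)) / (t - 0) - ip l g) < r" if "r > 0" for r
    proof -
      have gg: "ip g g \<ge> 0"
        using ip_self_nonneg[OF g] .
      then obtain \<eta> where "\<eta> > 0" and \<eta>: "\<And>t. t \<noteq> 0 \<Longrightarrow> \<bar>t\<bar> < \<eta> \<Longrightarrow>
          ip (\<lambda>x. diff_quot \<theta> e t x - l x) (\<lambda>x. diff_quot \<theta> e t x - l x) < r\<^sup>2 / (ip g g + 1)"
        using close[of "r\<^sup>2 / (ip g g + 1)"] \<open>r > 0\<close> by (auto simp: add_nonneg_pos)
      have "\<bar>(g (\<theta> + t *\<^sub>R e) - g \<theta>) / t - ip l g\<bar> < r" if "t \<noteq> 0" "\<bar>t\<bar> < \<eta>" for t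
      proof -
        have "((g (\<theta> + t *\<^sub>R e) - g \<theta>) / t - ip l g)\<^sup>2 \<le> r\<^sup>2 / (ip g g + 1) * ip g g"
          using diff_quot_error_bound[OF g l, of \<theta> t e] \<eta>[OF that] gg
          by (meson less_imp_le mult_right_mono order_trans)
        also have "\<dots> < r\<^sup>2"
          using gg \<open>r > 0\<close> by (simp add: field_simps)
        finally show ?thesis
          using \<open>r > 0\<close> real_sqrt_less_mono by fastforce
      qed
      then show ?thesis
        using \<open>\<eta> > 0\<close> by auto
    qed
    then show ?thesis
      unfolding has_field_derivative_iff LIM_eq by simp
  qed
  then show ?thesis
    using l by blast
qed

lemma pd1_section_representer:
  "(\<lambda>x. pd1 k j \<theta> x) \<in> H \<and> (\<forall>g\<in>H. grad g \<theta> $ j = ip (\<lambda>x. pd1 k j \<theta> x) g)"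
proof -
  obtain l where l: "l \<in> H"
    and D: "\<And>g. g \<in> H \<Longrightarrow> ((\<lambda>\<tau>. g (\<theta> + \<tau> *\<^sub>R axis j 1)) has_real_derivative ip l g) (at 0)"
    using directional_derivative_representer[of \<theta> "axis j 1"] by blast
  have "pd1 k j \<theta> x = l x" for x
    using DERIV_imp_deriv[OF D[OF kernel_section_in]] reproducing[OF l]
      ip_commute[OF l kernel_section_in]
    by (simp add: pd1_def)
  then have "(\<lambda>x. pd1 k j \<theta> x) = l"
    by blast
  then show ?thesis
    using l D by (simp add: grad_def DERIV_imp_deriv)
qed

lemma pd1_section_in: "(\<lambda>x. pd1 k j \<theta> x) \<in> H"
  using pd1_section_representer by blast

lemma grad_component_eq_ip: "g \<in> H \<Longrightarrow> grad g \<theta> $ j = ip (\<lambda>x. pd1 k j \<theta> x) g"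
  using pd1_section_representer by blast

lemma ip_pd1_sections: "ip (\<lambda>x. pd1 k i \<theta> x) (\<lambda>x. pd1 k j \<theta> x) = pd12 k i j \<theta> \<theta>"
proof -
  have "pd12 k i j \<theta> \<theta> = grad (\<lambda>x. pd1 k i \<theta> x) \<theta> $ j"
    by (simp add: grad_def pd12_def)
  also have "\<dots> = ip (\<lambda>x. pd1 k j \<theta> x) (\<lambda>x. pd1 k i \<theta> x)"
    by (rule grad_component_eq_ip[OF pd1_section_in])
  also have "\<dots> = ip (\<lambda>x. pd1 k i \<theta> x) (\<lambda>x. pd1 k j \<theta> x)"
    by (rule ip_commute[OF pd1_section_in pd1_section_in])
  finally show ?thesis ..
qed

end

section \<open>The block matrices as Gram matrices\<close>

lemma finite_idx1_set: "finite (idx1_set Nk :: ('n::finite) idx1 set)"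
  by (simp add: idx1_set_def)

lemma sum_idx1_set:
  "(\<Sum>p\<in>idx1_set Nk. \<phi> p) = (\<Sum>i<Nk. \<phi> (Dat i)) + (\<Sum>j\<in>(UNIV::('n::finite) set). \<phi> (Gr j))"
proof -
  have "(\<Sum>p\<in>idx1_set Nk. \<phi> p) = (\<Sum>p\<in>Dat ` {..<Nk}. \<phi> p) + (\<Sum>p\<in>range Gr. \<phi> p)"
    unfolding idx1_set_def by (rule sum.union_disjoint) auto
  then show ?thesis
    by (simp add: sum.reindex inj_on_def)
qed

lemma finite_idx2_set: "finite (idx2_set Nk :: ('n::finite) idx2 set)"
  by (simp add: idx2_set_def)

lemma sum_idx2_set:
  "(\<Sum>p\<in>idx2_set Nk. \<phi> p)
     = (\<Sum>i<Nk. \<phi> (Dat2 i)) + \<phi> Th + \<phi> ThP + (\<Sum>j\<in>(UNIV::('n::finite) set). \<phi> (Gr2 j))"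
proof -
  have "(\<Sum>p\<in>idx2_set Nk. \<phi> p) = (\<Sum>p\<in>Dat2 ` {..<Nk} \<union> {Th, ThP}. \<phi> p) + (\<Sum>p\<in>range Gr2. \<phi> p)"
    unfolding idx2_set_def by (rule sum.union_disjoint) auto
  also have "(\<Sum>p\<in>Dat2 ` {..<Nk} \<union> {Th, ThP}. \<phi> p) = (\<Sum>p\<in>Dat2 ` {..<Nk}. \<phi> p) + \<phi> Th + \<phi> ThP"
    by (subst sum.union_disjoint) (auto simp: add.assoc)
  finally show ?thesis
    by (simp add: sum.reindex inj_on_def)
qed

context rkhs_C2
begin

definition feature1 where
  "feature1 th \<theta> p = (case p of Dat i \<Rightarrow> (\<lambda>x. k x (th i)) | Gr j \<Rightarrow> (\<lambda>x. pd1 k j \<theta> x))"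

definition feature2 where
  "feature2 th \<theta> \<theta>' p = (case p of
     Dat2 i \<Rightarrow> (\<lambda>x. k x (th i)) | Th \<Rightarrow> (\<lambda>x. k x \<theta>) | ThP \<Rightarrow> (\<lambda>x. k x \<theta>')
   | Gr2 j \<Rightarrow> (\<lambda>x. pd1 k j \<theta> x))"

lemma feature1_in: "feature1 th \<theta> p \<in> H"
  by (cases p) (simp_all add: feature1_def kernel_section_in pd1_section_in)

lemma feature2_in: "feature2 th \<theta> \<theta>' p \<in> H"
  by (cases p) (simp_all add: feature2_def kernel_section_in pd1_section_in)

lemma Kfrak_eq_Gram: "Kfrak k th \<theta> p q = ip (feature1 th \<theta> p) (feature1 th \<theta> q)"
  by (cases p; cases q) (simp_all add: Kfrak_def feature1_def ip_kernel_sections ip_pd1_sections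
      reproducing reproducing_left pd1_section_in)

lemma Kfrak2_eq_Gram: "Kfrak2 k th \<theta> \<theta>' p q = ip (feature2 th \<theta> \<theta>' p) (feature2 th \<theta> \<theta>' q)"
  by (cases p; cases q) (simp_all add: Kfrak2_def feature2_def ip_kernel_sections ip_pd1_sections
      reproducing reproducing_left pd1_section_in kernel_commute)

lemma ip_cost1_feature1:
  assumes "g \<in> H"
  shows "ip (lincomb (idx1_set Nk) (cost1 v) (feature1 th \<theta>)) g = grad g \<theta> \<bullet> v"
proof -
  have "ip (lincomb (idx1_set Nk) (cost1 v) (feature1 th \<theta>)) g
      = (\<Sum>p\<in>idx1_set Nk. cost1 v p * ip (feature1 th \<theta> p) g)"
    using assms by (simp add: ip_lincomb_left finite_idx1_set feature1_in)
  also have "\<dots> = (\<Sum>j\<in>UNIV. v $ j * ip (\<lambda>x. pd1 k j \<theta> x) g)"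
    by (simp add: sum_idx1_set cost1_def feature1_def)
  also have "\<dots> = grad g \<theta> \<bullet> v"
    using assms by (simp add: inner_vec_def grad_component_eq_ip mult.commute)
  finally show ?thesis .
qed

lemma ip_cost2_feature2:
  assumes "g \<in> H"
  shows "ip (lincomb (idx2_set Nk) (cost2 c \<mu> v) (feature2 th \<theta> \<theta>')) g
    = g \<theta>' - g \<theta> + c * \<mu> * (grad g \<theta> \<bullet> v)"
proof -
  have "ip (lincomb (idx2_set Nk) (cost2 c \<mu> v) (feature2 th \<theta> \<theta>')) g
      = (\<Sum>p\<in>idx2_set Nk. cost2 c \<mu> v p * ip (feature2 th \<theta> \<theta>' p) g)"
    using assms by (simp add: ip_lincomb_left finite_idx2_set feature2_in)
  also have "\<dots> = - g \<theta> + g \<theta>' + (\<Sum>j\<in>UNIV. c * \<mu> * v $ j * ip (\<lambda>x. pd1 k j \<theta> x) g)"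
    using assms by (simp add: sum_idx2_set cost2_def feature2_def reproducing_left)
  also have "\<dots> = g \<theta>' - g \<theta> + c * \<mu> * (grad g \<theta> \<bullet> v)"
    using assms by (simp add: inner_vec_def grad_component_eq_ip sum_distrib_left mult_ac)
  finally show ?thesis .
qed

end

theorem theorem1:
  fixes k :: "real^'n \<Rightarrow> real^'n \<Rightarrow> real"
    and H :: "(real^'n \<Rightarrow> real) set"
    and ip :: "(real^'n \<Rightarrow> real) \<Rightarrow> (real^'n \<Rightarrow> real) \<Rightarrow> real"
    and Nk :: nat and th :: "nat \<Rightarrow> real^'n" and yt :: "nat \<Rightarrow> real"
    and \<delta> \<Gamma> :: real and f mk :: "real^'n \<Rightarrow> real" and \<theta> :: "real^'n"
  assumes kern: "is_kernel k"
    and rkhs: "is_RKHS k H ip"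
    and delta: "\<delta> \<ge> 0" and Gamma: "\<Gamma> > 0"
    and fH: "f \<in> H" and f_norm: "rnorm ip f \<le> \<Gamma>"
    and f_data: "\<forall>i<Nk. \<bar>f (th i) - yt i\<bar> \<le> \<delta>"
    and mkH: "mk \<in> H"
    and mk_data: "\<forall>i<Nk. \<bar>mk (th i) - yt i\<bar> \<le> \<delta>"
    and mk_min: "\<forall>m\<in>H. (\<forall>i<Nk. \<bar>m (th i) - yt i\<bar> \<le> \<delta>) \<longrightarrow> (rnorm ip mk)\<^sup>2 \<le> (rnorm ip m)\<^sup>2"
  defines "F \<equiv> {g \<in> H. (rnorm ip g)\<^sup>2 \<le> \<Gamma>\<^sup>2 \<and> (\<forall>i<Nk. \<bar>g (th i) - yt i\<bar> \<le> \<delta>)}"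
  shows
    "(\<exists>v. (\<exists>\<beta>. socp1_feasible k th yt Nk \<delta> \<Gamma> \<theta> \<beta> \<and>
                linf (idx1_set Nk) (cost1 (grad mk \<theta>)) (Kfrak k th \<theta>) \<beta> = v) \<and>
          (\<forall>\<beta>. socp1_feasible k th yt Nk \<delta> \<Gamma> \<theta> \<beta> \<longrightarrow>
                v \<le> linf (idx1_set Nk) (cost1 (grad mk \<theta>)) (Kfrak k th \<theta>) \<beta>) \<and>
          (\<exists>g\<in>F. grad g \<theta> \<bullet> grad mk \<theta> = v) \<and>
          (\<forall>g\<in>F. v \<le> grad g \<theta> \<bullet> grad mk \<theta>) \<and>
          v \<le> grad f \<theta> \<bullet> grad mk \<theta>)
     \<and>
     (\<forall>\<mu> c. \<mu> > 0 \<longrightarrow> 0 < c \<longrightarrow> c < 1 \<longrightarrow>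
        (let \<theta>p = \<theta> - \<mu> *\<^sub>R grad mk \<theta> in
         \<exists>v. (\<exists>\<beta>. socp2_feasible k th yt Nk \<delta> \<Gamma> \<theta> \<theta>p \<beta> \<and>
                linf (idx2_set Nk) (cost2 c \<mu> (grad mk \<theta>)) (Kfrak2 k th \<theta> \<theta>p) \<beta> = v) \<and>
          (\<forall>\<beta>. socp2_feasible k th yt Nk \<delta> \<Gamma> \<theta> \<theta>p \<beta> \<longrightarrow>
                linf (idx2_set Nk) (cost2 c \<mu> (grad mk \<theta>)) (Kfrak2 k th \<theta> \<theta>p) \<beta> \<le> v) \<and>
          (\<exists>g\<in>F. g \<theta>p - g \<theta> + c * \<mu> * (grad g \<theta> \<bullet> grad mk \<theta>) = v) \<and>
          (\<forall>g\<in>F. g \<theta>p - g \<theta> + c * \<mu> * (grad g \<theta> \<bullet> grad mk \<theta>) \<le> v) \<and>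
          f \<theta>p - f \<theta> + c * \<mu> * (grad f \<theta> \<bullet> grad mk \<theta>) \<le> v))"
proof -
  interpret rkhs_C2 k H ip
    using is_RKHS_imp_rkhs[OF rkhs] kern by (simp add: rkhs_C2_def rkhs_C2_axioms_def is_kernel_def)
  interpret fit_problem H ip "\<lambda>i x. k x (th i)" Nk yt \<delta> \<Gamma>
    by unfold_locales
  have F: "F = Collect feasible"
    by (auto simp: F_def feasible_def rnorm_squared reproducing_left)
  have "(rnorm ip f)\<^sup>2 \<le> \<Gamma>\<^sup>2"
    using f_norm ip_self_nonneg[OF fH] by (intro power_mono) (simp_all add: rnorm_def)
  then have "feasible f"
    using fH f_data by (simp add: feasible_def rnorm_squared reproducing_left)
  have dat1: "\<forall>i<Nk. Dat i \<in> idx1_set Nk \<and> feature1 th \<theta> (Dat i) = (\<lambda>x. k x (th i))"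
    by (simp add: idx1_set_def feature1_def)
  have dat2: "\<forall>i<Nk. Dat2 i \<in> idx2_set Nk \<and> feature2 th \<theta> \<theta>' (Dat2 i) = (\<lambda>x. k x (th i))" for \<theta>'
    by (simp add: idx2_set_def feature2_def)
  have socp1: "socp1_feasible k th yt Nk \<delta> \<Gamma> \<theta> = socp_feasible (idx1_set Nk) (Kfrak k th \<theta>) Dat"
    by (simp add: fun_eq_iff socp1_feasible_def socp_feasible_def)
  have socp2: "socp2_feasible k th yt Nk \<delta> \<Gamma> \<theta> \<theta>' = socp_feasible (idx2_set Nk) (Kfrak2 k th \<theta> \<theta>') Dat2"
    for \<theta>'
    by (simp add: fun_eq_iff socp2_feasible_def socp_feasible_def)
  show ?thesis
    unfolding F socp1 socp2 Let_def mem_Collect_eq Bex_def Ball_def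
    apply (intro conjI allI impI)
    subgoal
      using socp_min_eq_feasible_min[OF finite_idx1_set feature1_in Kfrak_eq_Gram dat1 ip_cost1_feature1]
        \<open>feasible f\<close> by blast
    subgoal
      using socp_max_eq_feasible_max[OF finite_idx2_set feature2_in Kfrak2_eq_Gram dat2 ip_cost2_feature2]
        \<open>feasible f\<close> by blast
    done
qed

end
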